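(* Let $p$ be prime and let $k\ge2$, $\ell\ge1$ be integers. Let $c_{i_1},\dots,c_{i_{k-1}}$ be $k-1$ pairwise distinct codewords of a $p$-ary prefix-free code with lengths $\ell_{i_1}\le\cdots\le\ell_{i_{k-1}}$, let $y_{i_m}=\sum_{t=0}^{\ell_{i_m}-1}c_{i_m,t}x^t\in F_p[x]$, and let $L_{i_m}=(\ell_{i_m}-1)(k-1)+\ell$. Let $r_0,\dots,r_{k-2}$ be independent random polynomials, each uniformly distributed over the polynomials in $F_p[x]$ of degree less than $L_{i_{k-1}}$. For a secret $s\in F_p[x]$ of degree less than $\ell$ define the random shares $$Z^{(s)}_{i_m}\equiv\sum_{j=0}^{k-2}r_j\,y_{i_m}^{\,j}+s\,y_{i_m}^{\,k-1}\pmod{x^{L_{i_m}}},\qquad 1\le m\le k-1,$$ each taken as a polynomial of degree less than $L_{i_m}$. Then for any two secrets $s_0,s_1$ of degree less than $\ell$, the random tuples $(Z^{(s_0)}_{i_1},\dots,Z^{(s_0)}_{i_{k-1}})$ and $(Z^{(s_1)}_{i_1},\dots,Z^{(s_1)}_{i_{k-1}})$ have the same probability distribution.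
   Context: A $p$-ary prefix-free code is a set of finite strings over the alphabet $F_p$ none of which is a prefix of another. $F_p[x]$ is the polynomial ring over the finite field $F_p$. *)

theory Defs
  imports "Berlekamp_Zassenhaus.Finite_Field" "HOL-Library.Sublist" "HOL-Probability.Probability"
begin

text \<open>The field F_p is modelled as the type 'p mod_ring with 'p of class prime_card,
  i.e. CARD('p) = p is prime. Strings over F_p are lists.\<close>

definition prefix_free :: "'a list set \<Rightarrow> bool" where
  "prefix_free C \<longleftrightarrow> (\<forall>u\<in>C. \<forall>v\<in>C. u \<noteq> v \<longrightarrow> \<not> prefix u v)"

definition codeword_poly :: "'a::comm_ring_1 list \<Rightarrow> 'a poly" where
  "codeword_poly c = (\<Sum>t<length c. monom (c ! t) t)"

definition polys_deg_less :: "nat \<Rightarrow> 'a::zero poly set" where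
  "polys_deg_less n = {q. degree q < n \<and> (n = 0 \<longrightarrow> q = 0)}"

definition share_len :: "nat \<Rightarrow> nat \<Rightarrow> nat \<Rightarrow> nat" where
  "share_len k l len = (len - 1) * (k - 1) + l"

definition share :: "nat \<Rightarrow> nat \<Rightarrow> 'a::field list \<Rightarrow> (nat \<Rightarrow> 'a poly) \<Rightarrow> 'a poly \<Rightarrow> 'a poly" where
  "share k l c r s =
     ((\<Sum>j<k-1. r j * codeword_poly c ^ j) + s * codeword_poly c ^ (k-1))
       mod monom 1 (share_len k l (length c))"

definition shares_dist ::
  "nat \<Rightarrow> nat \<Rightarrow> (nat \<Rightarrow> 'a::{field,finite} list) \<Rightarrow> 'a poly \<Rightarrow> 'a poly list pmf" where
  "shares_dist k l c s =
     map_pmf (\<lambda>r. map (\<lambda>m. share k l (c m) r s) [1..<k])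
       (Pi_pmf {..<k-1} 0
          (\<lambda>_. pmf_of_set (polys_deg_less (share_len k l (length (c (k-1)))))))"

end

theory Submission
  imports Defs
begin

text \<open>Let Q(Y) = prod_m (Y - y_m), a monic polynomial of degree k - 1 over F_p[x] vanishing at
  every y_m, and write Q = Y^(k-1) + sum_(j<k-1) q_j Y^j. Shifting the randomness by
  r_j \<mapsto> r_j - (s_1 - s_0) q_j turns every share for s_0 into the share for s_1, already before
  reduction modulo x^L. Each q_j has degree at most (k - 1)(len - 1) for the longest codeword length
  len, so the shifted r_j still have degree below L_(i_(k-1)), and a translation preserves the uniform
  distribution.\<close>

lemma finite_degree_less: "finite {q :: 'a::{zero,finite} poly. degree q < n}"
proof -
  have "{q :: 'a poly. degree q < n} \<subseteq> Poly ` {xs. length xs = n}"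
  proof
    fix q :: "'a poly" assume "q \<in> {q. degree q < n}"
    hence "q = Poly (map (coeff q) [0..<n])"
      by (intro poly_eqI) (auto simp: nth_default_def coeff_eq_0)
    thus "q \<in> Poly ` {xs. length xs = n}" by force
  qed
  moreover have "finite {xs :: 'a list. length xs = n}"
    using finite_lists_length_eq[of "UNIV :: 'a set" n] by simp
  ultimately show ?thesis by (meson finite_surj)
qed

lemma finite_polys_deg_less: "finite (polys_deg_less n :: 'a::{zero,finite} poly set)"
  unfolding polys_deg_less_def by (rule finite_subset[OF _ finite_degree_less[of n]]) blast

lemma zero_in_polys_deg_less: "0 < n \<Longrightarrow> 0 \<in> polys_deg_less n"
  by (simp add: polys_deg_less_def)

lemma diff_in_polys_deg_less:
  fixes p q :: "'a::ab_group_add poly"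
  shows "p \<in> polys_deg_less n \<Longrightarrow> q \<in> polys_deg_less n \<Longrightarrow> p - q \<in> polys_deg_less n"
  using degree_diff_le_max[of p q] by (auto simp: polys_deg_less_def)

lemma codeword_poly_degree_le: "degree (codeword_poly c) \<le> length c - 1"
  unfolding codeword_poly_def
  by (rule degree_sum_le) (auto intro: order.trans[OF degree_monom_le])

lemma degree_coeff_mult_le:
  fixes P Q :: "'a::field poly poly"
  assumes "\<And>i. degree (coeff P i) \<le> a" "\<And>i. degree (coeff Q i) \<le> b"
  shows "degree (coeff (P * Q) i) \<le> a + b"
  unfolding coeff_mult
  by (rule degree_sum_le) (auto intro: order.trans[OF degree_mult_le] add_mono assms)

lemma degree_coeff_prod_le:
  fixes f :: "'b \<Rightarrow> 'a::field poly poly"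
  assumes "finite A" "\<And>x i. x \<in> A \<Longrightarrow> degree (coeff (f x) i) \<le> D"
  shows "degree (coeff (prod f A) i) \<le> card A * D"
  using assms
proof (induction A arbitrary: i rule: finite_induct)
  case empty
  then show ?case by (cases i) auto
next
  case (insert x F)
  have "degree (coeff (f x * prod f F) i) \<le> D + card F * D"
    by (rule degree_coeff_mult_le) (use insert in auto)
  then show ?case using insert by simp
qed

lemma degree_coeff_linear_le: "degree (coeff [:-y, 1:] i) \<le> degree (y :: 'a::field poly)"
  by (cases i; cases "i - 1") (auto simp: coeff_pCons)

lemma degree_coeff_prod_linear_le:
  fixes y :: "'b \<Rightarrow> 'a::field poly"
  assumes "finite A" "\<And>m. m \<in> A \<Longrightarrow> degree (y m) \<le> D"
  shows "degree (coeff (\<Prod>m\<in>A. [:-y m, 1:]) j) \<le> card A * D"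
  using assms degree_coeff_linear_le order.trans by (intro degree_coeff_prod_le) blast+

lemma prod_linear_power_reduction:
  fixes y :: "'b \<Rightarrow> 'a::idom" and A :: "'b set"
  assumes "finite A" "m' \<in> A"
  shows "(\<Sum>j<card A. coeff (\<Prod>m\<in>A. [:-y m, 1:]) j * y m' ^ j) = - (y m' ^ card A)"
proof -
  define Q where "Q = (\<Prod>m\<in>A. [:-y m, 1:])"
  have degQ: "degree Q = card A"
    unfolding Q_def by (subst degree_prod_eq_sum_degree) auto
  have "0 = poly Q (y m')"
    unfolding Q_def poly_prod using assms by (intro prod_zero[symmetric]) auto
  also have "\<dots> = (\<Sum>j<Suc (card A). coeff Q j * y m' ^ j)"
    unfolding poly_altdef degQ lessThan_Suc_atMost ..
  also have "\<dots> = (\<Sum>j<card A. coeff Q j * y m' ^ j) + y m' ^ card A"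
    using degQ lead_coeff_prod[of "\<lambda>m. [:-y m, 1:]" A] by (simp add: Q_def)
  finally show ?thesis by (simp add: Q_def eq_neg_iff_add_eq_0)
qed

lemma exists_shift_absorbing_power:
  fixes y :: "'b \<Rightarrow> 'a::field poly" and d :: "'a poly"
  assumes "finite A" "\<And>m. m \<in> A \<Longrightarrow> degree (y m) \<le> D"
  obtains \<delta> where "\<And>j. degree (\<delta> j) \<le> degree d + card A * D"
    and "\<And>j. card A \<le> j \<Longrightarrow> \<delta> j = 0"
    and "\<And>m. m \<in> A \<Longrightarrow> (\<Sum>j<card A. \<delta> j * y m ^ j) = d * y m ^ card A"
proof
  define Q where "Q = (\<Prod>m\<in>A. [:-y m, 1:])"
  define \<delta> where "\<delta> j = (if j < card A then - (d * coeff Q j) else 0)" for j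
  show "degree (\<delta> j) \<le> degree d + card A * D" for j
    using degree_mult_le[of d "coeff Q j"] degree_coeff_prod_linear_le[where y = y and j = j, OF assms]
    by (auto simp: \<delta>_def Q_def)
  show "card A \<le> j \<Longrightarrow> \<delta> j = 0" for j
    by (simp add: \<delta>_def)
  show "(\<Sum>j<card A. \<delta> j * y m ^ j) = d * y m ^ card A" if "m \<in> A" for m
  proof -
    have "(\<Sum>j<card A. \<delta> j * y m ^ j) = - d * (\<Sum>j<card A. coeff Q j * y m ^ j)"
      by (simp add: \<delta>_def sum_distrib_left sum_negf mult.assoc)
    thus ?thesis
      using prod_linear_power_reduction[OF assms(1) that, of y] by (simp add: Q_def)
  qed
qed

lemma Pi_pmf_uniform_translate:
  fixes S :: "'a::ab_group_add set" and \<delta> :: "'b \<Rightarrow> 'a"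
  assumes "finite A" "finite S" "0 \<in> S"
    and diff_closed: "\<And>a b. a \<in> S \<Longrightarrow> b \<in> S \<Longrightarrow> a - b \<in> S"
    and "\<And>i. i \<in> A \<Longrightarrow> \<delta> i \<in> S" "\<And>i. i \<notin> A \<Longrightarrow> \<delta> i = 0"
  shows "map_pmf (\<lambda>r i. r i + \<delta> i) (Pi_pmf A 0 (\<lambda>_. pmf_of_set S)) = Pi_pmf A 0 (\<lambda>_. pmf_of_set S)"
proof -
  define E where "E = PiE_dflt A 0 (\<lambda>_. S)"
  have add_closed: "a + b \<in> S" if "a \<in> S" "b \<in> S" for a b
    using diff_closed[OF that(1) diff_closed[OF assms(3) that(2)]] by simp
  have P: "Pi_pmf A 0 (\<lambda>_. pmf_of_set S) = pmf_of_set E"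
    unfolding E_def using assms(1-3) by (intro Pi_pmf_of_set) auto
  have "bij_betw (\<lambda>r i. r i + \<delta> i) E E"
    by (rule bij_betwI[where g = "\<lambda>r i. r i - \<delta> i"])
       (use assms(5,6) add_closed diff_closed in \<open>auto simp: E_def PiE_dflt_def\<close>)
  moreover have "E \<noteq> {}" "finite E"
    using assms(1-3) by (auto simp: E_def)
  ultimately show ?thesis
    unfolding P by (subst map_pmf_of_set_bij_betw) auto
qed

lemma share_shift_secret:
  assumes "(\<Sum>j<k-1. \<delta> j * codeword_poly c ^ j) = d * codeword_poly c ^ (k-1)"
  shows "share k l c (\<lambda>j. r j + \<delta> j) s = share k l c r (s + d)"
  using assms by (simp add: share_def distrib_right sum.distrib algebra_simps)

theorem mainTheorem8:
  fixes C :: "'p::prime_card mod_ring list set"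
    and c :: "nat \<Rightarrow> 'p mod_ring list"
    and k l :: nat
    and s0 s1 :: "'p mod_ring poly"
  assumes "k \<ge> 2" and "l \<ge> 1"
    and "prefix_free C"
    and "\<forall>m\<in>{1..k-1}. c m \<in> C"
    and "inj_on c {1..k-1}"
    and "\<forall>m m'. 1 \<le> m \<and> m \<le> m' \<and> m' \<le> k-1 \<longrightarrow> length (c m) \<le> length (c m')"
    and "s0 \<in> polys_deg_less l" and "s1 \<in> polys_deg_less l"
  shows "shares_dist k l c s0 = shares_dist k l c s1"
proof -
  define D where "D = length (c (k-1)) - 1"
  define S :: "'p mod_ring poly set" where "S = polys_deg_less (share_len k l (length (c (k-1))))"
  define shares where "shares s r = map (\<lambda>m. share k l (c m) r s) [1..<k]" for s r
  obtain \<delta> where deg_\<delta>: "\<And>j. degree (\<delta> j) \<le> degree (s1 - s0) + (k-1) * D"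
    and \<delta>_zero: "\<And>j. k-1 \<le> j \<Longrightarrow> \<delta> j = 0"
    and \<delta>_absorbs: "\<And>m. m \<in> {1..k-1} \<Longrightarrow>
        (\<Sum>j<k-1. \<delta> j * codeword_poly (c m) ^ j) = (s1 - s0) * codeword_poly (c m) ^ (k-1)"
  proof (rule exists_shift_absorbing_power[where A = "{1..k-1}" and y = "codeword_poly \<circ> c"])
    show "degree ((codeword_poly \<circ> c) m) \<le> D" if "m \<in> {1..k-1}" for m
      using assms(6) that codeword_poly_degree_le[of "c m"] by (force simp: D_def)
  qed (use that in auto)
  have "degree (s1 - s0) < l"
    using assms(7,8) degree_diff_le_max[of s1 s0] by (auto simp: polys_deg_less_def)
  with deg_\<delta> assms(2) have "\<delta> j \<in> S" for j
    by (fastforce simp: S_def polys_deg_less_def share_len_def D_def mult.commute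
        intro: le_less_trans)
  with assms(2) have translate: "map_pmf (\<lambda>r j. r j + \<delta> j) (Pi_pmf {..<k-1} 0 (\<lambda>_. pmf_of_set S))
      = Pi_pmf {..<k-1} 0 (\<lambda>_. pmf_of_set S)"
    by (intro Pi_pmf_uniform_translate \<delta>_zero)
       (auto simp: S_def share_len_def finite_polys_deg_less zero_in_polys_deg_less
         diff_in_polys_deg_less)
  have shift: "shares s0 (\<lambda>j. r j + \<delta> j) = shares s1 r" for r
    unfolding shares_def using share_shift_secret[OF \<delta>_absorbs, where s = s0] by auto
  let ?R = "Pi_pmf {..<k-1} 0 (\<lambda>_. pmf_of_set S)"
  have "shares_dist k l c s0 = map_pmf (shares s0) ?R"
    unfolding shares_dist_def S_def shares_def ..
  also have "\<dots> = map_pmf (shares s0 \<circ> (\<lambda>r j. r j + \<delta> j)) ?R"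
    unfolding pmf.map_comp[symmetric] translate ..
  also have "\<dots> = map_pmf (shares s1) ?R"
    unfolding comp_def shift ..
  also have "\<dots> = shares_dist k l c s1"
    unfolding shares_dist_def S_def shares_def ..
  finally show ?thesis .
qed

end
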